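(* Let $\mathcal{G}_n$ be the set of binary words $w=w_1\cdots w_{2n}$ with $n$ zeros and $n$ ones, and let $X_n$ be the value of $\mathrm{da}(w)=|\{i\in[n]: w_i\neq w_{2n+1-i}\}|$ for $w$ uniformly random in $\mathcal{G}_n$. Then $X_n$ converges to a normal distribution (after standardization), with $$\mathbb{E}X_n=\frac n2+O(1),\qquad \mathbb{V}X_n=\frac n4+O(1).$$
   Context: $[n]=\{1,2,\dots,n\}$. *)

theory Defs
  imports "HOL-Probability.Probability" "HOL-Library.Landau_Symbols"
begin

text \<open>Binary words of length 2n with n zeros and n ones; letter 1 is True, 0 is False.\<close>
definition G :: "nat \<Rightarrow> bool list set" where
  "G n = {w. length w = 2 * n \<and> length (filter id w) = n}"

text \<open>da(w) = |{i in [n] : w_i ~= w_(2n+1-i)}|, with 1-based positions (list index i-1).\<close>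
definition da :: "nat \<Rightarrow> bool list \<Rightarrow> nat" where
  "da n w = card {i \<in> {1..n}. w ! (i - 1) \<noteq> w ! (2 * n - i)}"

definition unifG :: "nat \<Rightarrow> bool list pmf" where
  "unifG n = pmf_of_set (G n)"

definition meanX :: "nat \<Rightarrow> real" where
  "meanX n = measure_pmf.expectation (unifG n) (\<lambda>w. real (da n w))"

definition varX :: "nat \<Rightarrow> real" where
  "varX n = measure_pmf.variance (unifG n) (\<lambda>w. real (da n w))"

end

theory Submission
  imports Defs "HOL-Real_Asymp.Real_Asymp"
begin

(*
  Read a word w of length 2n as the list of the n pairs (w_i, w_(2n+1-i)).  A word with n ones
  and a pairs (1,1) has a pairs (0,0) and da w = n - 2a mixed pairs, so there are
  (n choose a) * (n - a choose a) * 2^(n - 2a) such words.  Absorption identities for these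
  counts give the factorial moments E X = n^2 / (2n - 1) and
  E X(X - 1) = n^2 (n - 1)^2 / ((2n - 1)(2n - 3)), hence the mean and the variance.

  For the limit law, compare the number a of (1,1) pairs with K div 2 for K binomial(n, 1/2).
  The ratio of the two point masses at j is a constant times (2j + 1) (2j choose j) / 4^j,
  which varies only by a factor 1 + O(D/n) on the window |n/2 - 2j| <= D.  Chebyshev bounds
  both tails, and D = n^(2/3) makes the total variation distance tend to 0.  The standardized
  binomial law is asymptotically normal since its characteristic function is cos(t / sqrt n)^n,
  and convergence of the integrals of the Lipschitz functions cts_step gives weak convergence.
*)

section \<open>Words as lists of symmetric pairs\<close>

lemma finite_lists_length: "finite {xs :: 'a :: finite list. length xs = n}"
  using finite_lists_length_eq[of "UNIV :: 'a set" n] by simp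

lemma lists_length_Suc_split:
  "{w :: bool list. length w = Suc m \<and> P w} =
     (#) True ` {v. length v = m \<and> P (True # v)} \<union> (#) False ` {v. length v = m \<and> P (False # v)}"
proof (intro set_eqI iffI)
  fix w assume "w \<in> {w. length w = Suc m \<and> P w}"
  then obtain b v where "w = b # v" "length v = m" "P (b # v)"
    by (auto simp: length_Suc_conv)
  then show "w \<in> (#) True ` {v. length v = m \<and> P (True # v)} \<union> (#) False ` {v. length v = m \<and> P (False # v)}"
    by (cases b) auto
qed auto

lemma card_lists_length_count_True:
  "card {w :: bool list. length w = m \<and> length (filter id w) = k} = m choose k"
proof (induction m arbitrary: k)
  case 0
  show ?case by (cases k) (simp_all cong: conj_cong)
next
  case (Suc m)
  have fin: "finite {v :: bool list. length v = m \<and> Q v}" for Q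
    by (rule finite_subset[OF _ finite_lists_length[of m]]) auto
  have "card {w :: bool list. length w = Suc m \<and> length (filter id w) = k}
      = card {v :: bool list. length v = m \<and> Suc (length (filter id v)) = k}
        + card {v :: bool list. length v = m \<and> length (filter id v) = k}"
    unfolding lists_length_Suc_split by (subst card_Un_disjoint) (auto simp: fin card_image)
  also have "\<dots> = Suc m choose k"
    using Suc.IH[of "k - 1"] Suc.IH[of k] by (cases k) (simp_all add: id_def)
  finally show ?case .
qed

lemma card_G: "card (G n) = (2 * n) choose n"
  unfolding G_def by (rule card_lists_length_count_True)

definition unfold_pairs :: "('a \<times> 'a) list \<Rightarrow> 'a list" where
  "unfold_pairs ps = map fst ps @ rev (map snd ps)"

definition fold_pairs :: "nat \<Rightarrow> 'a list \<Rightarrow> ('a \<times> 'a) list" where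
  "fold_pairs n w = zip (take n w) (rev (drop n w))"

lemma bij_betw_unfold_pairs:
  "bij_betw unfold_pairs {ps. length ps = n} {w. length w = 2 * n}"
  by (rule bij_betw_byWitness[where f' = "fold_pairs n"])
    (auto simp: unfold_pairs_def fold_pairs_def zip_map_fst_snd)

definition ones_pairs :: "(bool \<times> bool) list \<Rightarrow> nat" where
  "ones_pairs ps = length (filter (\<lambda>(a, b). a \<and> b) ps)"

definition mixed_pairs :: "(bool \<times> bool) list \<Rightarrow> nat" where
  "mixed_pairs ps = length (filter (\<lambda>(a, b). a \<noteq> b) ps)"

lemma count_True_unfold_pairs:
  "length (filter id (unfold_pairs ps)) = 2 * ones_pairs ps + mixed_pairs ps"
  by (induction ps) (auto simp: unfold_pairs_def ones_pairs_def mixed_pairs_def rev_filter[symmetric])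

lemma da_unfold_pairs: "da (length ps) (unfold_pairs ps) = mixed_pairs ps"
proof -
  let ?n = "length ps" and ?w = "unfold_pairs ps"
  have "?w ! i = fst (ps ! i) \<and> ?w ! (2 * ?n - Suc i) = snd (ps ! i)" if "i < ?n" for i
    using that by (auto simp: unfold_pairs_def nth_append rev_nth)
  then have "{i \<in> Suc ` {..<?n}. ?w ! (i - 1) \<noteq> ?w ! (2 * ?n - i)}
      = Suc ` {i. i < ?n \<and> fst (ps ! i) \<noteq> snd (ps ! i)}"
    by auto
  then show ?thesis
    unfolding da_def mixed_pairs_def length_filter_conv_card image_Suc_lessThan
    by (simp add: card_image case_prod_beta)
qed

lemma sum_lists_length_Suc:
  fixes f :: "'a :: finite list \<Rightarrow> 'b :: comm_monoid_add"
  shows "(\<Sum>xs | length xs = Suc n. f xs) = (\<Sum>x\<in>UNIV. \<Sum>xs | length xs = n. f (x # xs))"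
proof -
  have "{xs :: 'a list. length xs = Suc n} = (\<lambda>(x, xs). x # xs) ` (UNIV \<times> {xs. length xs = n})"
    by (auto simp: length_Suc_conv)
  moreover have "inj_on (\<lambda>(x, xs). x # xs) (UNIV \<times> {xs :: 'a list. length xs = n})"
    by (auto simp: inj_on_def)
  ultimately show ?thesis
    by (simp add: sum.reindex sum.cartesian_product split_def finite_lists_length)
qed

(* The number of lists of n bit pairs with a pairs (1,1) and d mixed pairs. *)
definition pair_pattern_count :: "nat \<Rightarrow> nat \<Rightarrow> nat \<Rightarrow> nat" where
  "pair_pattern_count n a d = (n choose a) * ((n - a) choose d) * 2 ^ d"

lemma pair_pattern_count_Suc:
  "pair_pattern_count (Suc n) a d =
     (if a = 0 then 0 else pair_pattern_count n (a - 1) d)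
     + (if d = 0 then 0 else 2 * pair_pattern_count n a (d - 1))
     + pair_pattern_count n a d"
proof (cases a; cases d)
  fix a' d' assume a: "a = Suc a'" and d: "d = Suc d'"
  show ?thesis
  proof (cases "a' < n")
    case True
    then have "n - a' = Suc (n - a)" using a by simp
    then show ?thesis
      unfolding a d pair_pattern_count_def by (simp add: algebra_simps)
  qed (simp add: a d pair_pattern_count_def)
qed (simp_all add: pair_pattern_count_def algebra_simps)

lemma pair_pattern_count_eq_0: "n < a \<or> n < d \<Longrightarrow> pair_pattern_count n a d = 0"
  by (auto simp: pair_pattern_count_def)

lemma sum_pattern_count_Suc:
  fixes \<Phi> :: "nat \<Rightarrow> nat \<Rightarrow> real"
  shows "(\<Sum>a\<le>Suc n. \<Sum>d\<le>Suc n. pair_pattern_count (Suc n) a d * \<Phi> a d)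
       = (\<Sum>a\<le>n. \<Sum>d\<le>n. pair_pattern_count n a d * \<Phi> (Suc a) d)
         + 2 * (\<Sum>a\<le>n. \<Sum>d\<le>n. pair_pattern_count n a d * \<Phi> a (Suc d))
         + (\<Sum>a\<le>n. \<Sum>d\<le>n. pair_pattern_count n a d * \<Phi> a d)"
proof -
  have shift_a: "(\<Sum>a\<le>Suc n. \<Sum>d\<le>Suc n. real (if a = 0 then 0 else pair_pattern_count n (a - 1) d) * \<Phi> a d)
      = (\<Sum>a\<le>n. \<Sum>d\<le>n. pair_pattern_count n a d * \<Phi> (Suc a) d)"
  proof -
    have "(\<Sum>d\<le>Suc n. real (if a = 0 then 0 else pair_pattern_count n (a - 1) d) * \<Phi> a d)
        = (\<Sum>d\<le>n. real (if a = 0 then 0 else pair_pattern_count n (a - 1) d) * \<Phi> a d)" for a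
      by (simp add: pair_pattern_count_eq_0)
    then show ?thesis by (simp only: sum.atMost_Suc_shift) simp
  qed
  have shift_d: "(\<Sum>a\<le>Suc n. \<Sum>d\<le>Suc n. real (if d = 0 then 0 else 2 * pair_pattern_count n a (d - 1)) * \<Phi> a d)
      = 2 * (\<Sum>a\<le>n. \<Sum>d\<le>n. pair_pattern_count n a d * \<Phi> a (Suc d))"
  proof -
    have "(\<Sum>d\<le>Suc n. real (if d = 0 then 0 else 2 * pair_pattern_count n a (d - 1)) * \<Phi> a d)
        = 2 * (\<Sum>d\<le>n. pair_pattern_count n a d * \<Phi> a (Suc d))" for a
      by (simp only: sum.atMost_Suc_shift) (simp add: sum_distrib_left mult.assoc)
    then show ?thesis by (simp add: pair_pattern_count_eq_0 sum_distrib_left)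
  qed
  have extend: "(\<Sum>a\<le>Suc n. \<Sum>d\<le>Suc n. real (pair_pattern_count n a d) * \<Phi> a d)
      = (\<Sum>a\<le>n. \<Sum>d\<le>n. pair_pattern_count n a d * \<Phi> a d)"
    by (simp add: pair_pattern_count_eq_0)
  show ?thesis
    unfolding pair_pattern_count_Suc of_nat_add distrib_right sum.distrib shift_a shift_d extend ..
qed

lemma sum_pair_lists_by_pattern:
  fixes \<Phi> :: "nat \<Rightarrow> nat \<Rightarrow> real"
  shows "(\<Sum>ps | length ps = n. \<Phi> (ones_pairs ps) (mixed_pairs ps))
       = (\<Sum>a\<le>n. \<Sum>d\<le>n. pair_pattern_count n a d * \<Phi> a d)"
proof (induction n arbitrary: \<Phi>)
  case 0
  then show ?case by (simp add: ones_pairs_def mixed_pairs_def pair_pattern_count_def)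
next
  case (Suc n)
  have UNIV_pairs: "(UNIV :: (bool \<times> bool) set) = {(True, True), (True, False), (False, True), (False, False)}"
    by auto
  have "(\<Sum>ps | length ps = Suc n. \<Phi> (ones_pairs ps) (mixed_pairs ps))
      = (\<Sum>ps | length ps = n. \<Phi> (Suc (ones_pairs ps)) (mixed_pairs ps))
        + 2 * (\<Sum>ps | length ps = n. \<Phi> (ones_pairs ps) (Suc (mixed_pairs ps)))
        + (\<Sum>ps | length ps = n. \<Phi> (ones_pairs ps) (mixed_pairs ps))"
    unfolding sum_lists_length_Suc UNIV_pairs
    by (simp add: ones_pairs_def mixed_pairs_def sum.distrib algebra_simps)
  also have "\<dots> = (\<Sum>a\<le>n. \<Sum>d\<le>n. pair_pattern_count n a d * \<Phi> (Suc a) d)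
       + 2 * (\<Sum>a\<le>n. \<Sum>d\<le>n. pair_pattern_count n a d * \<Phi> a (Suc d))
       + (\<Sum>a\<le>n. \<Sum>d\<le>n. pair_pattern_count n a d * \<Phi> a d)"
    using Suc.IH[of "\<lambda>a d. \<Phi> (Suc a) d"] Suc.IH[of "\<lambda>a d. \<Phi> a (Suc d)"] Suc.IH[of \<Phi>]
    by simp
  also have "\<dots> = (\<Sum>a\<le>Suc n. \<Sum>d\<le>Suc n. pair_pattern_count (Suc n) a d * \<Phi> a d)"
    by (rule sum_pattern_count_Suc[symmetric])
  finally show ?case .
qed


section \<open>The law of da\<close>

definition da_count :: "nat \<Rightarrow> nat \<Rightarrow> nat" where
  "da_count n a = (n choose a) * ((n - a) choose a) * 2 ^ (n - 2 * a)"

lemma da_count_eq_0: "n < 2 * a \<Longrightarrow> da_count n a = 0"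
  by (simp add: da_count_def) linarith

lemma da_count_eq_pair_pattern_count:
  assumes "2 * a \<le> n"
  shows "da_count n a = pair_pattern_count n a (n - 2 * a)"
proof -
  have "(n - a) choose a = (n - a) choose (n - 2 * a)"
    using binomial_symmetric[of a "n - a"] assms by (simp add: diff_diff_add mult_2)
  then show ?thesis by (simp add: da_count_def pair_pattern_count_def)
qed

lemma G_finite: "finite (G n)"
  unfolding G_def
  by (rule finite_subset[OF _ finite_lists_length[of "2 * n"]]) auto

lemma G_nonempty: "G n \<noteq> {}"
proof -
  have "replicate n True @ replicate n False \<in> G n" by (simp add: G_def)
  then show ?thesis by auto
qed

lemma sum_G_da:
  fixes F :: "nat \<Rightarrow> real"
  shows "(\<Sum>w\<in>G n. F (da n w)) = (\<Sum>a\<le>n. da_count n a * F (n - 2 * a))"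
proof -
  let ?f = "\<lambda>w. if length (filter id w) = n then F (da n w) else 0"
  have G: "G n = {w \<in> {w. length w = 2 * n}. length (filter id w) = n}"
    by (auto simp: G_def)
  have "(\<Sum>w\<in>G n. F (da n w)) = (\<Sum>w | length w = 2 * n. ?f w)"
    unfolding G by (rule sum.inter_filter[OF finite_lists_length])
  also have "\<dots> = (\<Sum>ps | length ps = n. ?f (unfold_pairs ps))"
    by (rule sum.reindex_bij_betw[OF bij_betw_unfold_pairs, symmetric])
  also have "\<dots> = (\<Sum>ps | length ps = n.
      (\<lambda>a d. if 2 * a + d = n then F d else 0) (ones_pairs ps) (mixed_pairs ps))"
    by (intro sum.cong refl) (auto simp: count_True_unfold_pairs da_unfold_pairs[symmetric])
  also have "\<dots> = (\<Sum>a\<le>n. \<Sum>d\<le>n. pair_pattern_count n a d * (if 2 * a + d = n then F d else 0))"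
    by (rule sum_pair_lists_by_pattern)
  also have "\<dots> = (\<Sum>a\<le>n. da_count n a * F (n - 2 * a))"
  proof (intro sum.cong refl)
    fix a
    show "(\<Sum>d\<le>n. pair_pattern_count n a d * (if 2 * a + d = n then F d else 0))
        = da_count n a * F (n - 2 * a)"
    proof (cases "2 * a \<le> n")
      case True
      then have "(\<Sum>d\<le>n. pair_pattern_count n a d * (if 2 * a + d = n then F d else 0))
          = (\<Sum>d\<le>n. if d = n - 2 * a then pair_pattern_count n a d * F d else 0)"
        by (intro sum.cong refl) auto
      then show ?thesis
        using True by (simp add: da_count_eq_pair_pattern_count)
    qed (simp add: da_count_eq_0)
  qed
  finally show ?thesis .
qed

lemma sum_da_count: "(\<Sum>a\<le>n. da_count n a) = (2 * n) choose n"
proof -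
  have "real (card (G n)) = (\<Sum>a\<le>n. real (da_count n a))"
    using sum_G_da[of "\<lambda>_. 1" n] by simp
  then show ?thesis
    unfolding card_G by (simp flip: of_nat_sum)
qed

lemma sum_da_count_beyond: "n \<le> k \<Longrightarrow> (\<Sum>a\<le>k. da_count n a) = (2 * n) choose n"
  by (subst sum.mono_neutral_right[of "{..k}" "{..n}"]) (auto simp: da_count_eq_0 sum_da_count)

definition prob_da :: "nat \<Rightarrow> nat \<Rightarrow> real" where
  "prob_da n a = da_count n a / ((2 * n) choose n)"

lemma prob_da_nonneg: "0 \<le> prob_da n a"
  by (simp add: prob_da_def)

lemma sum_prob_da: "(\<Sum>a\<le>n. prob_da n a) = 1"
  by (simp add: prob_da_def flip: sum_divide_distrib of_nat_sum) (simp add: sum_da_count)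

lemma prob_da_eq_0: "n < 2 * a \<Longrightarrow> prob_da n a = 0"
  by (simp add: prob_da_def da_count_eq_0)

lemma prob_da_mult_of_nat_diff:
  "prob_da n a * F (real (n - 2 * a)) = prob_da n a * F (real n - 2 * real a)"
  by (cases "2 * a \<le> n") (simp_all add: of_nat_diff prob_da_eq_0)

lemma expectation_da:
  fixes F :: "real \<Rightarrow> real"
  shows "measure_pmf.expectation (unifG n) (\<lambda>w. F (da n w)) = (\<Sum>a\<le>n. prob_da n a * F (real n - 2 * real a))"
proof -
  have "measure_pmf.expectation (unifG n) (\<lambda>w. F (da n w)) = (\<Sum>a\<le>n. prob_da n a * F (real (n - 2 * a)))"
    unfolding unifG_def integral_pmf_of_set[OF G_nonempty G_finite] card_G sum_G_da[of "\<lambda>k. F (real k)"]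
    by (simp add: prob_da_def sum_divide_distrib)
  then show ?thesis
    by (simp only: prob_da_mult_of_nat_diff)
qed

lemma meanX_eq_sum: "meanX n = (\<Sum>a\<le>n. prob_da n a * (real n - 2 * real a))"
  unfolding meanX_def by (rule expectation_da)

lemma varX_eq_sum: "varX n = (\<Sum>a\<le>n. prob_da n a * (real n - 2 * real a - meanX n)\<^sup>2)"
  unfolding varX_def meanX_def[symmetric] by (rule expectation_da)


section \<open>Mean and variance\<close>

lemma da_count_absorb: "(Suc n - 2 * a) * da_count (Suc n) a = 2 * Suc n * da_count n a"
proof (cases "2 * a \<le> n")
  case True
  have absorb_inner: "(Suc n - 2 * a) * (Suc n - a choose a) = (Suc n - a) * (n - a choose a)"
    using binomial_absorb_comp[of "Suc n - a" a] True by (simp add: Suc_diff_le mult_2)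
  have absorb_outer: "(Suc n - a) * (Suc n choose a) = Suc n * (n choose a)"
    using binomial_absorb_comp[of "Suc n" a] by simp
  have power: "(2 :: nat) ^ (Suc n - 2 * a) = 2 * 2 ^ (n - 2 * a)"
    using True by (simp add: Suc_diff_le)
  have "(Suc n - 2 * a) * da_count (Suc n) a
      = (Suc n choose a) * ((Suc n - 2 * a) * (Suc n - a choose a)) * 2 ^ (Suc n - 2 * a)"
    by (simp add: da_count_def mult_ac)
  also have "\<dots> = 2 * ((Suc n - a) * (Suc n choose a)) * (n - a choose a) * 2 ^ (n - 2 * a)"
    unfolding absorb_inner power by (simp add: mult_ac)
  also have "\<dots> = 2 * Suc n * da_count n a"
    unfolding absorb_outer da_count_def by (simp only: mult_ac)
  finally show ?thesis .
next
  case False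
  then have "Suc n - 2 * a = 0 \<or> Suc n < 2 * a" by auto
  then show ?thesis using False by (auto simp: da_count_eq_0)
qed

lemma sum_da_count_value:
  "(\<Sum>a\<le>Suc n. (Suc n - 2 * a) * da_count (Suc n) a) = 2 * Suc n * ((2 * n) choose n)"
proof -
  have "(\<Sum>a\<le>Suc n. (Suc n - 2 * a) * da_count (Suc n) a) = 2 * Suc n * (\<Sum>a\<le>Suc n. da_count n a)"
    by (simp only: da_count_absorb flip: sum_distrib_left)
  then show ?thesis
    by (simp only: sum_da_count_beyond le_SucI order_refl)
qed

lemma sum_da_count_falling_value:
  "(\<Sum>a\<le>Suc (Suc n). (Suc (Suc n) - 2 * a) * (Suc n - 2 * a) * da_count (Suc (Suc n)) a)
     = 4 * Suc (Suc n) * Suc n * ((2 * n) choose n)"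
proof -
  have "(Suc (Suc n) - 2 * a) * (Suc n - 2 * a) * da_count (Suc (Suc n)) a
      = 4 * Suc (Suc n) * Suc n * da_count n a" for a
  proof -
    have "(Suc (Suc n) - 2 * a) * (Suc n - 2 * a) * da_count (Suc (Suc n)) a
        = (Suc n - 2 * a) * ((Suc (Suc n) - 2 * a) * da_count (Suc (Suc n)) a)"
      by (simp only: mult_ac)
    also have "\<dots> = 2 * Suc (Suc n) * ((Suc n - 2 * a) * da_count (Suc n) a)"
      unfolding da_count_absorb[of "Suc n" a] by (simp only: mult_ac)
    also have "\<dots> = 4 * Suc (Suc n) * Suc n * da_count n a"
      unfolding da_count_absorb[of n a] by (simp add: algebra_simps)
    finally show ?thesis .
  qed
  then show ?thesis
    by (simp only: sum_da_count_beyond le_SucI order_refl flip: sum_distrib_left)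
qed

lemma central_binomial_Suc: "Suc m * ((2 * Suc m) choose Suc m) = 2 * (2 * m + 1) * ((2 * m) choose m)"
proof -
  have "Suc m * ((2 * Suc m) choose Suc m) = 2 * (Suc m * (Suc (2 * m) choose m))"
    using Suc_times_binomial[of m "Suc (2 * m)"] by simp
  also have "Suc (2 * m) choose m = Suc (2 * m) choose Suc m"
    using binomial_symmetric[of m "Suc (2 * m)"] by (simp add: Suc_diff_le)
  also have "Suc m * \<dots> = (2 * m + 1) * ((2 * m) choose m)"
    using Suc_times_binomial[of m "2 * m"] by simp
  finally show ?thesis by simp
qed

lemma central_binomial_Suc_real:
  "real ((2 * Suc m) choose Suc m) = 2 * (2 * real m + 1) / (real m + 1) * ((2 * m) choose m)"
proof -
  have "real (Suc m) * ((2 * Suc m) choose Suc m) = 2 * (2 * real m + 1) * ((2 * m) choose m)"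
    using arg_cong[OF central_binomial_Suc[of m], of real]
    by (simp only: of_nat_mult of_nat_add of_nat_numeral of_nat_1)
  then show ?thesis
    by (simp add: field_simps)
qed

lemma weighted_variance_eq_factorial_moment:
  fixes w x :: "'i \<Rightarrow> real"
  assumes "(\<Sum>i\<in>I. w i) = 1" and "(\<Sum>i\<in>I. w i * x i) = \<mu>"
  shows "(\<Sum>i\<in>I. w i * (x i - \<mu>)\<^sup>2) = (\<Sum>i\<in>I. w i * (x i * (x i - 1))) + \<mu> - \<mu>\<^sup>2"
proof -
  have "(\<Sum>i\<in>I. w i * (x i - \<mu>)\<^sup>2)
      = (\<Sum>i\<in>I. w i * (x i * (x i - 1)) + (1 - 2 * \<mu>) * (w i * x i) + \<mu>\<^sup>2 * w i)"
    by (intro sum.cong refl) (simp add: power2_eq_square algebra_simps)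
  also have "\<dots> = (\<Sum>i\<in>I. w i * (x i * (x i - 1))) + (1 - 2 * \<mu>) * (\<Sum>i\<in>I. w i * x i)
      + \<mu>\<^sup>2 * (\<Sum>i\<in>I. w i)"
    by (simp add: sum.distrib sum_distrib_left)
  finally show ?thesis
    using assms by (simp add: power2_eq_square algebra_simps)
qed

lemma weighted_second_moment_shift:
  fixes w x :: "'i \<Rightarrow> real"
  assumes "(\<Sum>i\<in>I. w i) = 1" and "(\<Sum>i\<in>I. w i * x i) = \<mu>"
  shows "(\<Sum>i\<in>I. w i * (x i - m)\<^sup>2) = (\<Sum>i\<in>I. w i * (x i - \<mu>)\<^sup>2) + (\<mu> - m)\<^sup>2"
proof -
  have "(\<Sum>i\<in>I. w i * (x i - m)\<^sup>2)
      = (\<Sum>i\<in>I. w i * (x i - \<mu>)\<^sup>2 + 2 * (\<mu> - m) * (w i * x i - \<mu> * w i) + (\<mu> - m)\<^sup>2 * w i)"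
    by (intro sum.cong refl) (simp add: power2_eq_square algebra_simps)
  also have "\<dots> = (\<Sum>i\<in>I. w i * (x i - \<mu>)\<^sup>2)
      + 2 * (\<mu> - m) * ((\<Sum>i\<in>I. w i * x i) - \<mu> * (\<Sum>i\<in>I. w i)) + (\<mu> - m)\<^sup>2 * (\<Sum>i\<in>I. w i)"
    by (simp add: sum.distrib sum_subtractf flip: sum_distrib_left)
  finally show ?thesis
    using assms by simp
qed

lemma meanX_closed_form:
  assumes "0 < n"
  shows "meanX n = real n ^ 2 / (2 * real n - 1)"
proof -
  obtain m where n: "n = Suc m" using assms by (cases n) auto
  define C where "C = real ((2 * m) choose m)"
  define C' where "C' = real ((2 * n) choose n)"
  have C: "0 < C" "C' = 2 * (2 * real m + 1) / (real m + 1) * C"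
    using central_binomial_Suc_real[of m] by (simp_all add: C_def C'_def n)
  have "meanX n = (\<Sum>a\<le>n. prob_da n a * real (n - 2 * a))"
    unfolding meanX_eq_sum
    by (intro sum.cong refl) (rule prob_da_mult_of_nat_diff[where F = "\<lambda>v. v", symmetric])
  also have "\<dots> = real (\<Sum>a\<le>n. (n - 2 * a) * da_count n a) / C'"
    by (simp add: prob_da_def C'_def sum_divide_distrib mult_ac)
  also have "\<dots> = 2 * real n * C / C'"
    unfolding n sum_da_count_value C_def by (simp only: of_nat_mult of_nat_numeral)
  also have "\<dots> = 2 * real n / (2 * (2 * real m + 1) / (real m + 1))"
    using C by simp
  also have "\<dots> = real n ^ 2 / (2 * real n - 1)"
    unfolding n by (simp add: field_simps power2_eq_square add_pos_nonneg)
  finally show ?thesis .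
qed

lemma factorial_moment_da_closed_form:
  assumes "2 \<le> n"
  shows "(\<Sum>a\<le>n. prob_da n a * ((real n - 2 * real a) * (real n - 2 * real a - 1)))
       = real n ^ 2 * (real n - 1) ^ 2 / ((2 * real n - 1) * (2 * real n - 3))"
proof -
  obtain m where n: "n = Suc (Suc m)" using assms by (metis add_2_eq_Suc le_Suc_ex)
  define C where "C = real ((2 * m) choose m)"
  define C'' where "C'' = real ((2 * n) choose n)"
  have C: "0 < C" "C'' = 2 * (2 * real m + 3) / (real m + 2) * (2 * (2 * real m + 1) / (real m + 1) * C)"
    using central_binomial_Suc_real[of m] central_binomial_Suc_real[of "Suc m"]
    by (simp_all add: C_def C''_def n algebra_simps)
  have falling: "real (n - 2 * a) * (real (n - 2 * a) - 1) = real ((n - 2 * a) * (Suc m - 2 * a))" for a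
  proof (cases "2 * a \<le> Suc m")
    case True
    define v where "v = Suc m - 2 * a"
    have "n - 2 * a = Suc v" using True unfolding n v_def by simp
    then show ?thesis unfolding v_def[symmetric] by (simp add: distrib_right)
  qed (simp add: n)
  have "(\<Sum>a\<le>n. prob_da n a * ((real n - 2 * real a) * (real n - 2 * real a - 1)))
      = (\<Sum>a\<le>n. prob_da n a * (real (n - 2 * a) * (real (n - 2 * a) - 1)))"
    by (intro sum.cong refl) (rule prob_da_mult_of_nat_diff[where F = "\<lambda>v. v * (v - 1)", symmetric])
  also have "\<dots> = real (\<Sum>a\<le>n. (n - 2 * a) * (Suc m - 2 * a) * da_count n a) / C''"
    unfolding falling by (simp add: prob_da_def C''_def sum_divide_distrib mult_ac)
  also have "\<dots> = 4 * real n * real (Suc m) * C / C''"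
    unfolding n sum_da_count_falling_value C_def by (simp only: of_nat_mult of_nat_numeral)
  also have "\<dots> = 4 * real n * real (Suc m) / (2 * (2 * real m + 3) / (real m + 2) * (2 * (2 * real m + 1) / (real m + 1)))"
    using C by simp
  also have "\<dots> = real n ^ 2 * (real n - 1) ^ 2 / ((2 * real n - 1) * (2 * real n - 3))"
    unfolding n by (simp add: divide_simps power2_eq_square) (simp add: algebra_simps)
  finally show ?thesis .
qed

lemma varX_closed_form:
  assumes "2 \<le> n"
  shows "varX n = real n / 4 + real n * (4 * real n ^ 2 - 6 * real n + 3) / (4 * (2 * real n - 1) ^ 2 * (2 * real n - 3))"
proof -
  have pos: "0 < n" using assms by simp
  have "varX n = (\<Sum>a\<le>n. prob_da n a * ((real n - 2 * real a) * (real n - 2 * real a - 1)))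
      + meanX n - (meanX n)\<^sup>2"
    unfolding varX_eq_sum by (rule weighted_variance_eq_factorial_moment[OF sum_prob_da meanX_eq_sum[symmetric]])
  also have "\<dots> = real n / 4 + real n * (4 * real n ^ 2 - 6 * real n + 3) / (4 * (2 * real n - 1) ^ 2 * (2 * real n - 3))"
    using assms unfolding factorial_moment_da_closed_form[OF assms] meanX_closed_form[OF pos]
    by (simp add: divide_simps power2_eq_square) (simp add: algebra_simps)
  finally show ?thesis .
qed

lemma eventually_meanX_near: "\<forall>\<^sub>F n in sequentially. \<bar>meanX n - real n / 2\<bar> \<le> 1"
proof -
  have "\<forall>\<^sub>F n in sequentially. \<bar>real n ^ 2 / (2 * real n - 1) - real n / 2\<bar> \<le> 1"
    by real_asymp
  moreover have "\<forall>\<^sub>F n in sequentially. 0 < n"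
    by (rule eventually_gt_at_top)
  ultimately show ?thesis
    by eventually_elim (simp add: meanX_closed_form)
qed

lemma eventually_varX_near: "\<forall>\<^sub>F n in sequentially. \<bar>varX n - real n / 4\<bar> \<le> 1"
proof -
  have "\<forall>\<^sub>F n in sequentially.
      \<bar>real n * (4 * real n ^ 2 - 6 * real n + 3) / (4 * (2 * real n - 1) ^ 2 * (2 * real n - 3))\<bar> \<le> 1"
    by real_asymp
  moreover have "\<forall>\<^sub>F n in sequentially. 2 \<le> n"
    by (rule eventually_ge_at_top)
  ultimately show ?thesis
    by eventually_elim (simp add: varX_closed_form)
qed

lemma meanX_bigo: "(\<lambda>n. meanX n - real n / 2) \<in> O(\<lambda>_. 1)"
  using eventually_meanX_near by (intro bigoI[where c = 1]) simp

lemma varX_bigo: "(\<lambda>n. varX n - real n / 4) \<in> O(\<lambda>_. 1)"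
  using eventually_varX_near by (intro bigoI[where c = 1]) simp


section \<open>The central limit theorem for the symmetric binomial law\<close>

lemma real_distribution_distr_pmf: "real_distribution (distr (measure_pmf p) borel (f :: 'a \<Rightarrow> real))"
  using prob_space.real_distribution_distr[OF prob_space_measure_pmf] by simp

lemma char_binomial_half:
  "char (distr (measure_pmf (binomial_pmf n (1/2))) borel (\<lambda>k. (real n - 2 * real k) / sqrt (real n))) t
     = complex_of_real (cos (t / sqrt (real n)) ^ n)"
proof -
  define u where "u = t / sqrt (real n)"
  have "char (distr (measure_pmf (binomial_pmf n (1/2))) borel (\<lambda>k. (real n - 2 * real k) / sqrt (real n))) t
      = (\<integral>k. iexp ((real n - 2 * real k) * u) \<partial>measure_pmf (binomial_pmf n (1/2)))"
    unfolding char_def u_def by (subst integral_distr) (auto simp: ac_simps)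
  also have "\<dots> = (\<Sum>k\<le>n. pmf (binomial_pmf n (1/2)) k *\<^sub>R iexp ((real n - 2 * real k) * u))"
    by (rule integral_measure_pmf) auto
  also have "\<dots> = (\<Sum>k\<le>n. of_nat (n choose k) * iexp (- u) ^ k * iexp u ^ (n - k) / 2 ^ n)"
  proof (intro sum.cong refl)
    fix k assume "k \<in> {..n}"
    then have "complex_of_real ((real n - 2 * real k) * u) = of_nat k * of_real (- u) + of_nat (n - k) * of_real u"
      by (simp add: of_nat_diff algebra_simps)
    then have "iexp ((real n - 2 * real k) * u) = iexp (- u) ^ k * iexp u ^ (n - k)"
      by (simp only: distrib_left exp_add mult.left_commute[of \<i>] exp_of_nat_mult)
    moreover have "pmf (binomial_pmf n (1/2)) k = (n choose k) / 2 ^ n"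
      using \<open>k \<in> {..n}\<close> by (simp add: power_divide flip: power_add)
    ultimately show "pmf (binomial_pmf n (1/2)) k *\<^sub>R iexp ((real n - 2 * real k) * u)
        = of_nat (n choose k) * iexp (- u) ^ k * iexp u ^ (n - k) / 2 ^ n"
      by (simp add: scaleR_conv_of_real)
  qed
  also have "\<dots> = ((iexp (- u) + iexp u) / 2) ^ n"
    by (simp add: binomial_ring power_divide sum_divide_distrib)
  also have "\<dots> = complex_of_real (cos u ^ n)"
    by (simp add: cos_exp_eq add.commute flip: cos_of_real)
  finally show ?thesis unfolding u_def .
qed

theorem binomial_half_clt:
  "weak_conv_m (\<lambda>n. distr (measure_pmf (binomial_pmf n (1/2))) borel (\<lambda>k. (real n - 2 * real k) / sqrt (real n)))
     std_normal_distribution"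
proof (rule levy_continuity[OF real_distribution_distr_pmf real_dist_normal_dist])
  fix t :: real
  have "(\<lambda>n. complex_of_real (cos (t / sqrt (real n)) ^ n)) \<longlonglongrightarrow> complex_of_real (exp (- (t\<^sup>2) / 2))"
    by (rule tendsto_of_real) (real_asymp simp: power2_eq_square)
  then show "(\<lambda>n. char (distr (measure_pmf (binomial_pmf n (1/2))) borel
      (\<lambda>k. (real n - 2 * real k) / sqrt (real n))) t) \<longlonglongrightarrow> char std_normal_distribution t"
    unfolding char_binomial_half char_std_normal_distribution .
qed

lemma integral_distr_binomial_half:
  assumes "f \<in> borel_measurable borel"
  shows "integral\<^sup>L (distr (measure_pmf (binomial_pmf n (1/2))) borel (\<lambda>k. (real n - 2 * real k) / sqrt (real n))) f
       = (\<Sum>k\<le>n. real (n choose k) / 2 ^ n * f ((real n - 2 * real k) / sqrt (real n)))"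
proof -
  have "integral\<^sup>L (distr (measure_pmf (binomial_pmf n (1/2))) borel (\<lambda>k. (real n - 2 * real k) / sqrt (real n))) f
      = (\<integral>k. f ((real n - 2 * real k) / sqrt (real n)) \<partial>measure_pmf (binomial_pmf n (1/2)))"
    using assms by (subst integral_distr) auto
  also have "\<dots> = (\<Sum>k\<le>n. f ((real n - 2 * real k) / sqrt (real n)) * pmf (binomial_pmf n (1/2)) k)"
    by (rule integral_measure_pmf_real) auto
  also have "\<dots> = (\<Sum>k\<le>n. real (n choose k) / 2 ^ n * f ((real n - 2 * real k) / sqrt (real n)))"
    by (intro sum.cong refl) (simp add: power_divide mult_ac flip: power_add)
  finally show ?thesis .
qed


section \<open>Total variation distance to the halved binomial law\<close>

(* P(K div 2 = j) for K binomial(n, 1/2), as (n choose 2j) + (n choose 2j+1) = (n+1 choose 2j+1). *)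
definition prob_binomial_div2 :: "nat \<Rightarrow> nat \<Rightarrow> real" where
  "prob_binomial_div2 n j = (Suc n choose (2 * j + 1)) / 2 ^ n"

lemma prob_binomial_div2_nonneg: "0 \<le> prob_binomial_div2 n j"
  by (simp add: prob_binomial_div2_def)

lemma sum_prob_binomial_div2_times:
  fixes g :: "nat \<Rightarrow> real"
  shows "(\<Sum>j\<le>n. prob_binomial_div2 n j * g j) = (\<Sum>k\<le>n. (n choose k) / 2 ^ n * g (k div 2))"
proof -
  have "(\<Sum>k\<le>n. real (n choose k) * g (k div 2)) = (\<Sum>k\<le>Suc (2 * n). real (n choose k) * g (k div 2))"
    by (rule sum.mono_neutral_left) auto
  also have "\<dots> = (\<Sum>j\<le>n. real (n choose (2 * j)) * g j + real (n choose Suc (2 * j)) * g j)"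
    by (simp only: sum.in_pairs_0) simp
  also have "\<dots> = (\<Sum>j\<le>n. real (Suc n choose (2 * j + 1)) * g j)"
    by (simp add: algebra_simps)
  finally have "(\<Sum>k\<le>n. real (n choose k) * g (k div 2)) = (\<Sum>j\<le>n. real (Suc n choose (2 * j + 1)) * g j)" .
  then show ?thesis
    by (simp add: prob_binomial_div2_def sum_divide_distrib[symmetric])
qed

lemma sum_prob_binomial_div2: "(\<Sum>j\<le>n. prob_binomial_div2 n j) = 1"
  using sum_prob_binomial_div2_times[of n "\<lambda>_. 1"]
  by (simp flip: sum_divide_distrib of_nat_sum add: choose_row_sum)

lemma sum_binomial_centered_sq: "(\<Sum>k\<le>n. real (n choose k) * (real n - 2 * real k)\<^sup>2) = real n * 2 ^ n"
proof (induction n)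
  case (Suc n)
  have pascal: "(\<Sum>k\<le>Suc n. real (Suc n choose k) * f k) = (\<Sum>k\<le>n. real (n choose k) * (f k + f (Suc k)))"
    for f :: "nat \<Rightarrow> real"
  proof -
    have "(\<Sum>k\<le>Suc n. real (Suc n choose k) * f k) = f 0 + (\<Sum>k\<le>n. real (Suc n choose Suc k) * f (Suc k))"
      by (subst sum.atMost_Suc_shift) simp
    also have "\<dots> = (f 0 + (\<Sum>k\<le>n. real (n choose Suc k) * f (Suc k))) + (\<Sum>k\<le>n. real (n choose k) * f (Suc k))"
      by (simp add: sum.distrib algebra_simps)
    also have "f 0 + (\<Sum>k\<le>n. real (n choose Suc k) * f (Suc k)) = (\<Sum>k\<le>Suc n. real (n choose k) * f k)"
      by (subst sum.atMost_Suc_shift[of _ n]) simp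
    also have "\<dots> = (\<Sum>k\<le>n. real (n choose k) * f k)"
      by simp
    finally show ?thesis
      by (simp add: sum.distrib algebra_simps)
  qed
  have "(\<Sum>k\<le>Suc n. real (Suc n choose k) * (real (Suc n) - 2 * real k)\<^sup>2)
      = (\<Sum>k\<le>n. 2 * (real (n choose k) * (real n - 2 * real k)\<^sup>2) + 2 * real (n choose k))"
    unfolding pascal by (intro sum.cong refl) (simp add: power2_eq_square algebra_simps)
  also have "\<dots> = real (Suc n) * 2 ^ Suc n"
    by (simp add: sum.distrib Suc.IH flip: sum_distrib_left of_nat_sum) (simp add: choose_row_sum algebra_simps)
  finally show ?case .
qed simp

lemma weighted_tail_le_second_moment:
  fixes w x :: "'i \<Rightarrow> real"
  assumes "finite I" and "\<And>i. i \<in> I \<Longrightarrow> 0 \<le> w i" and "0 < D"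
  shows "(\<Sum>i | i \<in> I \<and> D < \<bar>x i - m\<bar>. w i) \<le> (\<Sum>i\<in>I. w i * (x i - m)\<^sup>2) / D\<^sup>2"
proof -
  have "(\<Sum>i | i \<in> I \<and> D < \<bar>x i - m\<bar>. w i) \<le> (\<Sum>i | i \<in> I \<and> D < \<bar>x i - m\<bar>. w i * ((x i - m)\<^sup>2 / D\<^sup>2))"
  proof (rule sum_mono)
    fix i assume i: "i \<in> {i. i \<in> I \<and> D < \<bar>x i - m\<bar>}"
    then have "D\<^sup>2 \<le> (x i - m)\<^sup>2"
      using assms(3) by (simp add: abs_le_square_iff[symmetric])
    then have "w i * 1 \<le> w i * ((x i - m)\<^sup>2 / D\<^sup>2)"
      using i assms(2,3) by (intro mult_left_mono) (auto simp: field_simps)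
    then show "w i \<le> w i * ((x i - m)\<^sup>2 / D\<^sup>2)"
      by simp
  qed
  also have "\<dots> \<le> (\<Sum>i\<in>I. w i * ((x i - m)\<^sup>2 / D\<^sup>2))"
    using assms by (intro sum_mono2) auto
  finally show ?thesis
    by (simp add: sum_divide_distrib)
qed

lemma abs_diff_le_of_cross_bounds:
  fixes a b P Q R :: real
  assumes "0 \<le> a" "0 \<le> b" "P \<le> 1" "Q \<le> 1" "1 \<le> R"
    and "a * Q \<le> R * b * P" "b * P \<le> R * a * Q"
  shows "\<bar>a - b\<bar> \<le> a * (1 - Q) + b * (1 - P) + (R - 1) * (a + b)"
proof -
  have "R * b * P \<le> R * b" and "R * a * Q \<le> R * a"
    using assms by (simp_all add: mult_left_le)
  moreover have "0 \<le> a * (1 - Q)" "0 \<le> b * (1 - P)" "0 \<le> (R - 1) * a" "0 \<le> (R - 1) * b"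
    using assms by simp_all
  ultimately show ?thesis
    using assms(6,7) by (simp add: abs_le_iff algebra_simps)
qed

lemma ratio_oscillation_cross_bounds:
  fixes p q h :: "'i \<Rightarrow> real"
  assumes ratio: "\<And>j. j \<in> J \<Longrightarrow> p j = c * h j * q j" and "0 \<le> c"
    and q: "\<And>j. j \<in> J \<Longrightarrow> 0 \<le> q j"
    and oscillation: "\<And>j j'. j \<in> J \<Longrightarrow> j' \<in> J \<Longrightarrow> h j \<le> R * h j'" and "j \<in> J"
  shows "p j * sum q J \<le> R * q j * sum p J" and "q j * sum p J \<le> R * p j * sum q J"
proof -
  have nonneg: "0 \<le> c * q j * q j'" if "j' \<in> J" for j'
    using that \<open>j \<in> J\<close> \<open>0 \<le> c\<close> q by simp
  have P: "sum p J = (\<Sum>j'\<in>J. c * h j' * q j')"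
    using ratio by simp
  have "p j * sum q J = (\<Sum>j'\<in>J. c * q j * q j' * h j)"
    unfolding ratio[OF \<open>j \<in> J\<close>] by (simp add: sum_distrib_left mult_ac)
  also have "\<dots> \<le> (\<Sum>j'\<in>J. c * q j * q j' * (R * h j'))"
    using \<open>j \<in> J\<close> nonneg oscillation by (intro sum_mono mult_left_mono) auto
  also have "\<dots> = R * q j * sum p J"
    unfolding P by (simp add: sum_distrib_left mult_ac)
  finally show "p j * sum q J \<le> R * q j * sum p J" .
  have "q j * sum p J = (\<Sum>j'\<in>J. c * q j * q j' * h j')"
    unfolding P by (simp add: sum_distrib_left mult_ac)
  also have "\<dots> \<le> (\<Sum>j'\<in>J. c * q j * q j' * (R * h j))"
    using \<open>j \<in> J\<close> nonneg oscillation by (intro sum_mono mult_left_mono) auto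
  also have "\<dots> = R * p j * sum q J"
    unfolding ratio[OF \<open>j \<in> J\<close>] by (simp add: sum_distrib_left mult_ac)
  finally show "q j * sum p J \<le> R * p j * sum q J" .
qed

lemma sum_abs_diff_le_of_ratio_oscillation:
  fixes p q h :: "'i \<Rightarrow> real"
  assumes "finite I" and "J \<subseteq> I"
    and p: "\<And>i. i \<in> I \<Longrightarrow> 0 \<le> p i" "sum p I = 1"
    and q: "\<And>i. i \<in> I \<Longrightarrow> 0 \<le> q i" "sum q I = 1"
    and ratio: "\<And>j. j \<in> J \<Longrightarrow> p j = c * h j * q j" "0 \<le> c"
    and oscillation: "\<And>j j'. j \<in> J \<Longrightarrow> j' \<in> J \<Longrightarrow> h j \<le> R * h j'" "1 \<le> R"
  shows "(\<Sum>i\<in>I. \<bar>p i - q i\<bar>) \<le> 2 * (R - 1) + 2 * sum p (I - J) + 2 * sum q (I - J)"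
proof -
  define P where "P = sum p J"
  define Q where "Q = sum q J"
  have split: "sum f I = sum f J + sum f (I - J)" for f :: "'i \<Rightarrow> real"
    using sum.subset_diff[OF \<open>J \<subseteq> I\<close> \<open>finite I\<close>] by (simp add: add.commute)
  have nonneg: "0 \<le> p j" "0 \<le> q j" if "j \<in> J" for j
    using that \<open>J \<subseteq> I\<close> p q by auto
  have P: "0 \<le> P" "P = 1 - sum p (I - J)" "0 \<le> sum p (I - J)"
    and Q: "0 \<le> Q" "Q = 1 - sum q (I - J)" "0 \<le> sum q (I - J)"
    using split[of p] split[of q] p q nonneg by (auto simp: P_def Q_def intro: sum_nonneg)
  have "\<bar>p j - q j\<bar> \<le> p j * (1 - Q) + q j * (1 - P) + (R - 1) * (p j + q j)" if "j \<in> J" for j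
  proof (rule abs_diff_le_of_cross_bounds)
    show "p j * Q \<le> R * q j * P"
      unfolding P_def Q_def by (rule ratio_oscillation_cross_bounds(1)[OF ratio nonneg(2) oscillation(1) that])
    show "q j * P \<le> R * p j * Q"
      unfolding P_def Q_def by (rule ratio_oscillation_cross_bounds(2)[OF ratio nonneg(2) oscillation(1) that])
  qed (use that nonneg P Q oscillation(2) in auto)
  then have "(\<Sum>j\<in>J. \<bar>p j - q j\<bar>) \<le> (\<Sum>j\<in>J. p j * (1 - Q) + q j * (1 - P) + (R - 1) * (p j + q j))"
    by (rule sum_mono)
  also have "\<dots> = P * (1 - Q) + Q * (1 - P) + (R - 1) * (P + Q)"
    by (simp add: P_def Q_def sum.distrib sum_distrib_left sum_distrib_right distrib_left)
  also have "\<dots> \<le> (1 - Q) + (1 - P) + 2 * (R - 1)"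
  proof -
    have "P * (1 - Q) \<le> 1 - Q" "Q * (1 - P) \<le> 1 - P"
      using P Q by (auto intro: mult_left_le_one_le)
    moreover have "(R - 1) * (P + Q) \<le> (R - 1) * 2"
      using P Q oscillation(2) by (intro mult_left_mono) auto
    ultimately show ?thesis by simp
  qed
  finally have "(\<Sum>j\<in>J. \<bar>p j - q j\<bar>) \<le> sum p (I - J) + sum q (I - J) + 2 * (R - 1)"
    using P Q by simp
  moreover have "(\<Sum>i\<in>I - J. \<bar>p i - q i\<bar>) \<le> sum p (I - J) + sum q (I - J)"
    unfolding sum.distrib[symmetric] using p q by (intro sum_mono) (fastforce simp: abs_le_iff)
  ultimately show ?thesis
    using split[of "\<lambda>i. \<bar>p i - q i\<bar>"] by simp
qed

definition ratio_scale :: "nat \<Rightarrow> real" where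
  "ratio_scale n = 4 ^ n / (real (Suc n) * ((2 * n) choose n))"

definition ratio_weight :: "nat \<Rightarrow> real" where
  "ratio_weight j = real (2 * j + 1) * ((2 * j) choose j) / 4 ^ j"

lemma prob_da_eq_ratio: "prob_da n j = ratio_scale n * ratio_weight j * prob_binomial_div2 n j"
proof (cases "2 * j \<le> n")
  case True
  define x :: real where "x = 2 ^ (n - 2 * j)"
  define y :: real where "y = 4 ^ j"
  have "y = 2 ^ (2 * j)"
    by (simp add: y_def power_mult)
  then have two: "(2 :: real) ^ n = x * y"
    using True by (simp add: x_def flip: power_add)
  have "(4 :: real) ^ n = (x * y)\<^sup>2"
    unfolding power2_eq_square two[symmetric] by (simp flip: power_mult_distrib)
  note pow = two this
  have "real (n choose j) * real ((n - j) choose j) = fact n / (fact j * fact (n - j)) * (fact (n - j) / (fact j * fact (n - 2 * j)))"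
    using True by (simp add: binomial_fact diff_diff_add mult_2)
  also have "\<dots> = fact n / (fact j * fact j * fact (n - 2 * j))"
    by (simp add: field_simps)
  finally have da: "real (da_count n j) = fact n / (fact j * fact j * fact (n - 2 * j)) * x"
    by (simp add: da_count_def x_def)
  have "real (Suc n choose (2 * j + 1)) = fact (Suc n) / (fact (2 * j + 1) * fact (Suc n - (2 * j + 1)))"
    using True by (intro binomial_fact) simp
  then have bin: "real (Suc n choose (2 * j + 1))
      = real (Suc n) * fact n / (real (2 * j + 1) * fact (2 * j) * fact (n - 2 * j))"
    by (simp add: fact_Suc del: binomial_Suc_Suc)
  have central: "real ((2 * j) choose j) = fact (2 * j) / (fact j * fact j)"
    by (simp add: binomial_fact mult_2)
  define a where "a = real (Suc n)"
  define b where "b = real (2 * j + 1)"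
  define C where "C = real ((2 * n) choose n)"
  have "0 < x" "0 < y" "0 < a" "0 < b" "0 < C"
    by (simp_all add: x_def y_def a_def b_def C_def)
  then show ?thesis
    unfolding prob_da_def ratio_scale_def ratio_weight_def prob_binomial_div2_def da bin central pow
      y_def[symmetric] a_def[symmetric] b_def[symmetric] C_def[symmetric]
    by (simp add: field_simps power2_eq_square)
next
  case False
  then show ?thesis
    by (simp add: prob_da_eq_0 prob_binomial_div2_def del: binomial_Suc_Suc)
qed

lemma ratio_weight_pos: "0 < ratio_weight j"
  by (simp add: ratio_weight_def)

lemma ratio_weight_Suc: "ratio_weight (Suc j) = ratio_weight j * (1 + 1 / (2 * real j + 2))"
proof -
  define C where "C = real ((2 * j) choose j)"
  have "0 < C" by (simp add: C_def)
  then show ?thesis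
    unfolding ratio_weight_def central_binomial_Suc_real C_def[symmetric]
    by (simp add: divide_simps) (simp add: algebra_simps)
qed

lemma ratio_weight_mono: "j \<le> j' \<Longrightarrow> ratio_weight j \<le> ratio_weight j'"
  by (rule lift_Suc_mono_le[of ratio_weight]) (simp_all add: ratio_weight_Suc ratio_weight_pos)

lemma ratio_weight_add_le: "ratio_weight (j + d) \<le> ratio_weight j * exp (real d / (2 * real j + 2))"
proof (induction d)
  case (Suc d)
  have "1 + 1 / (2 * real (j + d) + 2) \<le> 1 + 1 / (2 * real j + 2)"
    by (intro add_left_mono divide_left_mono) auto
  also have "\<dots> \<le> exp (1 / (2 * real j + 2))"
    by (rule exp_ge_add_one_self)
  finally have "ratio_weight (j + Suc d) \<le> ratio_weight (j + d) * exp (1 / (2 * real j + 2))"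
    using ratio_weight_pos[of "j + d"] by (simp add: ratio_weight_Suc)
  also have "\<dots> \<le> ratio_weight j * exp (real d / (2 * real j + 2)) * exp (1 / (2 * real j + 2))"
    using Suc.IH by (rule mult_right_mono) simp
  also have "\<dots> = ratio_weight j * exp (real (Suc d) / (2 * real j + 2))"
    by (simp add: mult.assoc add_divide_distrib flip: exp_add)
  finally show ?case .
qed simp

definition da_window :: "nat \<Rightarrow> real \<Rightarrow> nat set" where
  "da_window n D = {j. \<bar>real n / 2 - 2 * real j\<bar> \<le> D}"

lemma ratio_weight_le_on_window:
  assumes "0 \<le> D" "D < real n / 2 + 2" and "j \<in> da_window n D" "j' \<in> da_window n D"
  shows "ratio_weight j \<le> exp (D / (real n / 2 - D + 2)) * ratio_weight j'"
proof (cases "j \<le> j'")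
  case True
  then have "ratio_weight j \<le> 1 * ratio_weight j'"
    by (simp add: ratio_weight_mono)
  also have "\<dots> \<le> exp (D / (real n / 2 - D + 2)) * ratio_weight j'"
    using assms(1,2) ratio_weight_pos[of j'] by (intro mult_right_mono) auto
  finally show ?thesis .
next
  case False
  define d where "d = j - j'"
  have j: "j = j' + d" and "real d \<le> D" and "real n / 2 - D + 2 \<le> 2 * real j' + 2"
    using False assms(3,4) by (auto simp: d_def da_window_def abs_le_iff of_nat_diff)
  then have exponent: "real d / (2 * real j' + 2) \<le> D / (real n / 2 - D + 2)"
    using assms(1,2) by (intro frac_le) auto
  have "ratio_weight j \<le> ratio_weight j' * exp (real d / (2 * real j' + 2))"
    unfolding j by (rule ratio_weight_add_le)
  also have "\<dots> \<le> ratio_weight j' * exp (D / (real n / 2 - D + 2))"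
    using exponent ratio_weight_pos[of j'] by (intro mult_left_mono) auto
  finally show ?thesis
    by (simp add: mult.commute)
qed

lemma outside_da_window:
  "{..n} - da_window n D = {j. j \<in> {..n} \<and> D < \<bar>(real n - 2 * real j) - real n / 2\<bar>}"
  by (auto simp: da_window_def abs_minus_commute)

lemma prob_da_outside_window:
  assumes "0 < D"
  shows "(\<Sum>j\<in>{..n} - da_window n D. prob_da n j) \<le> (varX n + (meanX n - real n / 2)\<^sup>2) / D\<^sup>2"
proof -
  have "(\<Sum>j\<le>n. prob_da n j * (real n - 2 * real j - real n / 2)\<^sup>2) = varX n + (meanX n - real n / 2)\<^sup>2"
    unfolding varX_eq_sum by (rule weighted_second_moment_shift[OF sum_prob_da meanX_eq_sum[symmetric]])
  then show ?thesis
    unfolding outside_da_window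
    using weighted_tail_le_second_moment[of "{..n}" "prob_da n" D "\<lambda>j. real n - 2 * real j" "real n / 2"]
    by (simp add: prob_da_nonneg assms)
qed

lemma prob_binomial_div2_outside_window:
  assumes "1 < D"
  shows "(\<Sum>j\<in>{..n} - da_window n D. prob_binomial_div2 n j) \<le> real n / (4 * (D - 1)\<^sup>2)"
proof -
  let ?w = "\<lambda>k. real (n choose k) / 2 ^ n"
  let ?W = "da_window n D"
  have "(\<Sum>j\<in>{..n} - ?W. prob_binomial_div2 n j) = (\<Sum>j\<le>n. prob_binomial_div2 n j * (if j \<in> ?W then 0 else 1))"
    by (simp add: if_distrib sum.If_cases Diff_eq)
  also have "\<dots> = (\<Sum>k\<le>n. ?w k * (if k div 2 \<in> ?W then 0 else 1))"
    by (rule sum_prob_binomial_div2_times)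
  also have "\<dots> \<le> (\<Sum>k\<le>n. if D - 1 < \<bar>real k - real n / 2\<bar> then ?w k else 0)"
  proof (rule sum_mono)
    fix k
    have "\<bar>real k - 2 * real (k div 2)\<bar> \<le> 1"
      by linarith
    then have "k div 2 \<notin> ?W \<Longrightarrow> D - 1 < \<bar>real k - real n / 2\<bar>"
      by (auto simp: da_window_def)
    then show "?w k * (if k div 2 \<in> ?W then 0 else 1) \<le> (if D - 1 < \<bar>real k - real n / 2\<bar> then ?w k else 0)"
      by auto
  qed
  also have "\<dots> = (\<Sum>k | k \<in> {..n} \<and> D - 1 < \<bar>real k - real n / 2\<bar>. ?w k)"
    by (rule sum.inter_filter[symmetric]) simp
  also have "\<dots> \<le> (\<Sum>k\<le>n. ?w k * (real k - real n / 2)\<^sup>2) / (D - 1)\<^sup>2"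
    using assms by (intro weighted_tail_le_second_moment) auto
  also have "(\<Sum>k\<le>n. ?w k * (real k - real n / 2)\<^sup>2) = (\<Sum>k\<le>n. real (n choose k) * (real n - 2 * real k)\<^sup>2) / (4 * 2 ^ n)"
    by (simp add: sum_divide_distrib power2_eq_square field_simps)
  finally show ?thesis
    by (simp add: sum_binomial_centered_sq)
qed

lemma sum_abs_prob_da_binomial_div2_le:
  assumes "1 < D" "D < real n / 2 + 2"
  shows "(\<Sum>j\<le>n. \<bar>prob_da n j - prob_binomial_div2 n j\<bar>)
    \<le> 2 * (exp (D / (real n / 2 - D + 2)) - 1) + 2 * ((varX n + (meanX n - real n / 2)\<^sup>2) / D\<^sup>2)
      + 2 * (real n / (4 * (D - 1)\<^sup>2))"
proof -
  have "(\<Sum>j\<le>n. \<bar>prob_da n j - prob_binomial_div2 n j\<bar>)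
      \<le> 2 * (exp (D / (real n / 2 - D + 2)) - 1) + 2 * sum (prob_da n) ({..n} - {..n} \<inter> da_window n D)
        + 2 * sum (prob_binomial_div2 n) ({..n} - {..n} \<inter> da_window n D)"
  proof (rule sum_abs_diff_le_of_ratio_oscillation[where c = "ratio_scale n"])
    show "prob_da n j = ratio_scale n * ratio_weight j * prob_binomial_div2 n j" for j
      by (rule prob_da_eq_ratio)
    show "ratio_weight j \<le> exp (D / (real n / 2 - D + 2)) * ratio_weight j'"
      if "j \<in> {..n} \<inter> da_window n D" "j' \<in> {..n} \<inter> da_window n D" for j j'
      using that assms by (intro ratio_weight_le_on_window) auto
  qed (use assms in \<open>auto simp: prob_da_nonneg prob_binomial_div2_nonneg sum_prob_da sum_prob_binomial_div2
         ratio_scale_def\<close>)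
  also have "{..n} - {..n} \<inter> da_window n D = {..n} - da_window n D"
    by auto
  finally show ?thesis
    using prob_da_outside_window[of D n] prob_binomial_div2_outside_window[of D n] assms by linarith
qed

lemma tendsto_sum_abs_prob_da_binomial_div2: "(\<lambda>n. \<Sum>j\<le>n. \<bar>prob_da n j - prob_binomial_div2 n j\<bar>) \<longlonglongrightarrow> 0"
proof (rule tendsto_sandwich[OF _ _ tendsto_const])
  define D :: "nat \<Rightarrow> real" where "D n = real n powr (2 / 3)" for n
  define B where "B n = 2 * (exp (D n / (real n / 2 - D n + 2)) - 1) + 2 * ((real n / 4 + 2) / (D n)\<^sup>2)
      + 2 * (real n / (4 * (D n - 1)\<^sup>2))" for n
  have "B \<longlonglongrightarrow> 0"
    unfolding B_def D_def by real_asymp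
  moreover have "\<forall>\<^sub>F n in sequentially. (\<Sum>j\<le>n. \<bar>prob_da n j - prob_binomial_div2 n j\<bar>) \<le> B n"
  proof -
    have "\<forall>\<^sub>F n in sequentially. 1 < D n" "\<forall>\<^sub>F n in sequentially. D n < real n / 2 + 2"
      unfolding D_def by real_asymp+
    with eventually_meanX_near eventually_varX_near show ?thesis
    proof eventually_elim
      case (elim n)
      then have "(meanX n - real n / 2)\<^sup>2 \<le> 1"
        by (simp add: abs_square_le_1)
      then have "varX n + (meanX n - real n / 2)\<^sup>2 \<le> real n / 4 + 2"
        using elim by linarith
      then have "(varX n + (meanX n - real n / 2)\<^sup>2) / (D n)\<^sup>2 \<le> (real n / 4 + 2) / (D n)\<^sup>2"
        by (rule divide_right_mono) simp
      then show ?case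
        using sum_abs_prob_da_binomial_div2_le[of "D n" n] elim unfolding B_def by linarith
    qed
  qed
  ultimately show "\<forall>\<^sub>F n in sequentially. (\<Sum>j\<le>n. \<bar>prob_da n j - prob_binomial_div2 n j\<bar>) \<le> B n"
    and "B \<longlonglongrightarrow> 0"
    by simp_all
qed (simp add: sum_nonneg)


section \<open>Convergence of the standardized law\<close>

lemma weighted_abs_dev_le:
  fixes w x :: "'i \<Rightarrow> real"
  assumes "\<And>i. i \<in> I \<Longrightarrow> 0 \<le> w i" "sum w I = 1" "(\<Sum>i\<in>I. w i * (x i - \<mu>)\<^sup>2) = \<sigma>\<^sup>2" "0 < \<sigma>"
  shows "(\<Sum>i\<in>I. w i * \<bar>x i - \<mu>\<bar>) \<le> \<sigma>"
proof -
  have amgm: "\<bar>a\<bar> \<le> (a\<^sup>2 / \<sigma> + \<sigma>) / 2" for a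
  proof -
    have "0 \<le> (\<bar>a\<bar> - \<sigma>)\<^sup>2" by simp
    then show ?thesis
      using assms(4) by (simp add: field_simps power2_eq_square)
  qed
  have "(\<Sum>i\<in>I. w i * \<bar>x i - \<mu>\<bar>) \<le> (\<Sum>i\<in>I. w i * (((x i - \<mu>)\<^sup>2 / \<sigma> + \<sigma>) / 2))"
    using assms(1) by (intro sum_mono mult_left_mono amgm) auto
  also have "\<dots> = (\<Sum>i\<in>I. w i * (x i - \<mu>)\<^sup>2 / (2 * \<sigma>) + \<sigma> / 2 * w i)"
    by (intro sum.cong refl) (simp add: field_simps)
  also have "\<dots> = (\<Sum>i\<in>I. w i * (x i - \<mu>)\<^sup>2) / (2 * \<sigma>) + \<sigma> / 2 * sum w I"
    by (simp add: sum.distrib sum_divide_distrib sum_distrib_left)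
  also have "\<dots> = \<sigma>"
    using assms(2-4) by (simp add: power2_eq_square)
  finally show ?thesis .
qed

lemma weighted_standardization_diff_le:
  fixes w x :: "'i \<Rightarrow> real"
  assumes "\<And>i. i \<in> I \<Longrightarrow> 0 \<le> w i" "sum w I = 1" "(\<Sum>i\<in>I. w i * (x i - \<mu>)\<^sup>2) = \<sigma>\<^sup>2" "0 < \<sigma>" "0 < s"
  shows "(\<Sum>i\<in>I. w i * \<bar>(x i - \<mu>) / \<sigma> - (x i - m) / s\<bar>) \<le> \<bar>1 - \<sigma> / s\<bar> + \<bar>\<mu> - m\<bar> / s"
proof -
  have pointwise: "\<bar>(x i - \<mu>) / \<sigma> - (x i - m) / s\<bar> \<le> \<bar>x i - \<mu>\<bar> * \<bar>1 / \<sigma> - 1 / s\<bar> + \<bar>\<mu> - m\<bar> / s" for i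
  proof -
    have "(x i - \<mu>) / \<sigma> - (x i - m) / s = (x i - \<mu>) * (1 / \<sigma> - 1 / s) - (\<mu> - m) / s"
      using assms(4,5) by (simp add: field_simps)
    then show ?thesis
      using abs_triangle_ineq4[of "(x i - \<mu>) * (1 / \<sigma> - 1 / s)" "(\<mu> - m) / s"] assms(5)
      by (simp add: abs_mult abs_divide)
  qed
  have "(\<Sum>i\<in>I. w i * \<bar>(x i - \<mu>) / \<sigma> - (x i - m) / s\<bar>)
      \<le> (\<Sum>i\<in>I. w i * \<bar>x i - \<mu>\<bar> * \<bar>1 / \<sigma> - 1 / s\<bar> + \<bar>\<mu> - m\<bar> / s * w i)"
  proof (rule sum_mono)
    fix i assume "i \<in> I"
    then have "w i * \<bar>(x i - \<mu>) / \<sigma> - (x i - m) / s\<bar>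
        \<le> w i * (\<bar>x i - \<mu>\<bar> * \<bar>1 / \<sigma> - 1 / s\<bar> + \<bar>\<mu> - m\<bar> / s)"
      using assms(1) by (intro mult_left_mono pointwise) auto
    then show "w i * \<bar>(x i - \<mu>) / \<sigma> - (x i - m) / s\<bar>
        \<le> w i * \<bar>x i - \<mu>\<bar> * \<bar>1 / \<sigma> - 1 / s\<bar> + \<bar>\<mu> - m\<bar> / s * w i"
      by (simp add: algebra_simps)
  qed
  also have "\<dots> = (\<Sum>i\<in>I. w i * \<bar>x i - \<mu>\<bar>) * \<bar>1 / \<sigma> - 1 / s\<bar> + \<bar>\<mu> - m\<bar> / s * sum w I"
    by (simp add: sum.distrib sum_distrib_left sum_distrib_right)
  also have "\<dots> \<le> \<sigma> * \<bar>1 / \<sigma> - 1 / s\<bar> + \<bar>\<mu> - m\<bar> / s"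
    using weighted_abs_dev_le[OF assms(1-4)] assms(2) by (simp add: mult_right_mono)
  also have "\<sigma> * \<bar>1 / \<sigma> - 1 / s\<bar> = \<bar>1 - \<sigma> / s\<bar>"
    using assms(4) by (simp add: abs_mult[symmetric] field_simps)
  finally show ?thesis .
qed

lemma abs_1_minus_divide_le:
  fixes \<sigma> s :: real
  assumes "0 < \<sigma>" "0 < s"
  shows "\<bar>1 - \<sigma> / s\<bar> \<le> \<bar>s\<^sup>2 - \<sigma>\<^sup>2\<bar> / s\<^sup>2"
proof -
  have "\<bar>s - \<sigma>\<bar> * s \<le> \<bar>s - \<sigma>\<bar> * (s + \<sigma>)"
    using assms by (intro mult_left_mono) auto
  also have "\<dots> = \<bar>(s - \<sigma>) * (s + \<sigma>)\<bar>"
    using assms by (simp add: abs_mult)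
  also have "(s - \<sigma>) * (s + \<sigma>) = s\<^sup>2 - \<sigma>\<^sup>2"
    by (simp add: power2_eq_square algebra_simps)
  finally show ?thesis
    using assms by (simp add: field_simps power2_eq_square abs_divide)
qed

lemma lipschitz_on_cts_step:
  assumes "x < y"
  shows "(1 / (y - x))-lipschitz_on UNIV (cts_step x y)"
proof (rule lipschitz_onI)
  have clamp: "cts_step x y t = max 0 (min 1 ((y - t) / (y - x)))" for t
    using assms by (auto simp: cts_step_def field_simps max_def min_def)
  have "\<bar>max 0 (min 1 u) - max 0 (min 1 v)\<bar> \<le> \<bar>u - v\<bar>" for u v :: real
    by (auto simp: max_def min_def abs_le_iff)
  then have "\<bar>cts_step x y a - cts_step x y b\<bar> \<le> \<bar>(y - a) / (y - x) - (y - b) / (y - x)\<bar>" for a b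
    unfolding clamp .
  also have "\<bar>(y - a) / (y - x) - (y - b) / (y - x)\<bar> = 1 / (y - x) * \<bar>a - b\<bar>" for a b
    using assms by (simp add: diff_divide_distrib[symmetric] abs_divide abs_minus_commute)
  finally show "dist (cts_step x y a) (cts_step x y b) \<le> 1 / (y - x) * dist a b" for a b
    by (simp add: dist_real_def)
qed (use assms in simp)

lemma abs_cts_step_le: "x < y \<Longrightarrow> \<bar>cts_step x y t\<bar> \<le> 1"
  by (auto simp: cts_step_def field_simps)

lemma integral_distr_std_da:
  assumes "f \<in> borel_measurable borel"
  shows "integral\<^sup>L (distr (measure_pmf (unifG n)) borel (\<lambda>w. (real (da n w) - meanX n) / sqrt (varX n))) f
       = (\<Sum>j\<le>n. prob_da n j * f ((real n - 2 * real j - meanX n) / sqrt (varX n)))"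
  using assms expectation_da[of n "\<lambda>v. f ((v - meanX n) / sqrt (varX n))"]
  by (subst integral_distr) auto

lemma abs_sum_diff_le_sum_abs_diff:
  fixes p q g :: "'i \<Rightarrow> real"
  assumes "\<And>i. \<bar>g i\<bar> \<le> 1"
  shows "\<bar>(\<Sum>i\<in>I. p i * g i) - (\<Sum>i\<in>I. q i * g i)\<bar> \<le> (\<Sum>i\<in>I. \<bar>p i - q i\<bar>)"
proof -
  have "\<bar>(\<Sum>i\<in>I. p i * g i) - (\<Sum>i\<in>I. q i * g i)\<bar> = \<bar>\<Sum>i\<in>I. (p i - q i) * g i\<bar>"
    by (simp add: sum_subtractf left_diff_distrib)
  also have "\<dots> \<le> (\<Sum>i\<in>I. \<bar>p i - q i\<bar>)"
    using assms by (intro order_trans[OF sum_abs] sum_mono) (simp add: abs_mult mult_left_le)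
  finally show ?thesis .
qed

lemma eventually_std_da_sum_near_centred:
  assumes lip: "L-lipschitz_on UNIV f"
  shows "\<forall>\<^sub>F n in sequentially.
    \<bar>(\<Sum>j\<le>n. prob_da n j * f ((real n - 2 * real j - meanX n) / sqrt (varX n)))
      - (\<Sum>j\<le>n. prob_da n j * f ((real n - 4 * real j) / sqrt (real n)))\<bar> \<le> L * (4 / real n + 2 / sqrt (real n))"
  using eventually_gt_at_top[of 4] eventually_meanX_near eventually_varX_near
proof eventually_elim
  case (elim n)
  define \<sigma> where "\<sigma> = sqrt (varX n)"
  define s where "s = sqrt (real n) / 2"
  have "0 \<le> L"
    using lip by (rule lipschitz_on_nonneg)
  have "0 < \<sigma>" "0 < s" "\<sigma>\<^sup>2 = varX n" "s\<^sup>2 = real n / 4"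
    using elim by (auto simp: \<sigma>_def s_def power_divide)
  have centred: "(real n - 4 * real j) / sqrt (real n) = (real n - 2 * real j - real n / 2) / s" for j
    using \<open>0 < s\<close> by (simp add: s_def field_simps)
  let ?x = "\<lambda>j. real n - 2 * real j"
  have "\<bar>(\<Sum>j\<le>n. prob_da n j * f ((?x j - meanX n) / \<sigma>)) - (\<Sum>j\<le>n. prob_da n j * f ((?x j - real n / 2) / s))\<bar>
      = \<bar>\<Sum>j\<le>n. prob_da n j * (f ((?x j - meanX n) / \<sigma>) - f ((?x j - real n / 2) / s))\<bar>"
    by (simp add: sum_subtractf right_diff_distrib)
  also have "\<dots> \<le> (\<Sum>j\<le>n. prob_da n j * \<bar>f ((?x j - meanX n) / \<sigma>) - f ((?x j - real n / 2) / s)\<bar>)"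
    by (rule order_trans[OF sum_abs]) (simp add: abs_mult prob_da_nonneg)
  also have "\<dots> \<le> (\<Sum>j\<le>n. prob_da n j * (L * \<bar>(?x j - meanX n) / \<sigma> - (?x j - real n / 2) / s\<bar>))"
    using lipschitz_onD[OF lip] by (intro sum_mono mult_left_mono prob_da_nonneg) (simp add: dist_real_def)
  also have "\<dots> = L * (\<Sum>j\<le>n. prob_da n j * \<bar>(?x j - meanX n) / \<sigma> - (?x j - real n / 2) / s\<bar>)"
    by (simp add: sum_distrib_left mult_ac)
  also have "\<dots> \<le> L * (\<bar>1 - \<sigma> / s\<bar> + \<bar>meanX n - real n / 2\<bar> / s)"
    using \<open>0 \<le> L\<close> \<open>0 < \<sigma>\<close> \<open>0 < s\<close> \<open>\<sigma>\<^sup>2 = varX n\<close>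
    by (intro mult_left_mono weighted_standardization_diff_le)
      (auto simp: prob_da_nonneg sum_prob_da varX_eq_sum)
  also have "\<dots> \<le> L * (4 / real n + 2 / sqrt (real n))"
  proof (intro mult_left_mono add_mono \<open>0 \<le> L\<close>)
    have "\<bar>1 - \<sigma> / s\<bar> \<le> \<bar>s\<^sup>2 - \<sigma>\<^sup>2\<bar> / s\<^sup>2"
      using \<open>0 < \<sigma>\<close> \<open>0 < s\<close> by (rule abs_1_minus_divide_le)
    also have "\<dots> = \<bar>varX n - real n / 4\<bar> / (real n / 4)"
      unfolding \<open>\<sigma>\<^sup>2 = varX n\<close> \<open>s\<^sup>2 = real n / 4\<close> by (simp add: abs_minus_commute)
    also have "\<dots> \<le> 1 / (real n / 4)"
      using elim by (intro divide_right_mono) auto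
    finally show "\<bar>1 - \<sigma> / s\<bar> \<le> 4 / real n"
      by simp
    show "\<bar>meanX n - real n / 2\<bar> / s \<le> 2 / sqrt (real n)"
      using elim \<open>0 < s\<close> by (simp add: s_def divide_right_mono)
  qed
  finally show ?case
    unfolding centred \<sigma>_def .
qed

lemma binomial_div2_sum_near_binomial:
  assumes lip: "L-lipschitz_on UNIV f"
  shows "\<bar>(\<Sum>j\<le>n. prob_binomial_div2 n j * f ((real n - 4 * real j) / sqrt (real n)))
      - (\<Sum>k\<le>n. real (n choose k) / 2 ^ n * f ((real n - 2 * real k) / sqrt (real n)))\<bar> \<le> L * (2 / sqrt (real n))"
proof -
  let ?w = "\<lambda>k. real (n choose k) / 2 ^ n"
  let ?y = "\<lambda>k. (real n - 4 * real (k div 2)) / sqrt (real n)" and ?z = "\<lambda>k. (real n - 2 * real k) / sqrt (real n)"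
  have close: "\<bar>f (?y k) - f (?z k)\<bar> \<le> L * (2 / sqrt (real n))" for k
  proof -
    have "\<bar>2 * real k - 4 * real (k div 2)\<bar> \<le> 2"
      by linarith
    then have "\<bar>?y k - ?z k\<bar> \<le> 2 / sqrt (real n)"
      by (simp add: diff_divide_distrib[symmetric] abs_divide divide_right_mono)
    then have "L * \<bar>?y k - ?z k\<bar> \<le> L * (2 / sqrt (real n))"
      using lipschitz_on_nonneg[OF lip] by (rule mult_left_mono)
    then show ?thesis
      using lipschitz_onD[OF lip, of "?y k" "?z k"] by (simp add: dist_real_def)
  qed
  have "\<bar>(\<Sum>j\<le>n. prob_binomial_div2 n j * f ((real n - 4 * real j) / sqrt (real n))) - (\<Sum>k\<le>n. ?w k * f (?z k))\<bar>
      = \<bar>\<Sum>k\<le>n. ?w k * (f (?y k) - f (?z k))\<bar>"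
    by (simp add: sum_prob_binomial_div2_times sum_subtractf right_diff_distrib)
  also have "\<dots> \<le> (\<Sum>k\<le>n. ?w k * (L * (2 / sqrt (real n))))"
  proof (rule order_trans[OF sum_abs], rule sum_mono)
    fix k
    have "0 \<le> ?w k" by simp
    then show "\<bar>?w k * (f (?y k) - f (?z k))\<bar> \<le> ?w k * (L * (2 / sqrt (real n)))"
      unfolding abs_mult abs_of_nonneg[OF \<open>0 \<le> ?w k\<close>] by (rule mult_left_mono[OF close])
  qed
  also have "\<dots> = L * (2 / sqrt (real n))"
    by (simp flip: sum_distrib_right sum_divide_distrib of_nat_sum add: choose_row_sum)
  finally show ?thesis .
qed

lemma tendsto_integral_std_da:
  fixes f :: "real \<Rightarrow> real"
  assumes lip: "L-lipschitz_on UNIV f" and bounded: "\<And>z. \<bar>f z\<bar> \<le> 1"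
  shows "(\<lambda>n. integral\<^sup>L (distr (measure_pmf (unifG n)) borel (\<lambda>w. (real (da n w) - meanX n) / sqrt (varX n))) f)
     \<longlonglongrightarrow> integral\<^sup>L std_normal_distribution f"
proof -
  have cont: "continuous_on UNIV f"
    using lip by (rule lipschitz_on_continuous_on)
  (* E n is the integral in question; T1 centres at n/2 and scales by sqrt n / 2 instead of using
     the exact mean and standard deviation, T2 replaces the law of a by that of K div 2, and T3 is
     the integral against the standardized binomial law. *)
  define E where "E n = (\<Sum>j\<le>n. prob_da n j * f ((real n - 2 * real j - meanX n) / sqrt (varX n)))" for n
  define T1 where "T1 n = (\<Sum>j\<le>n. prob_da n j * f ((real n - 4 * real j) / sqrt (real n)))" for n
  define T2 where "T2 n = (\<Sum>j\<le>n. prob_binomial_div2 n j * f ((real n - 4 * real j) / sqrt (real n)))" for n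
  define T3 where "T3 n = (\<Sum>k\<le>n. real (n choose k) / 2 ^ n * f ((real n - 2 * real k) / sqrt (real n)))" for n
  define tv where "tv n = (\<Sum>j\<le>n. \<bar>prob_da n j - prob_binomial_div2 n j\<bar>)" for n
  have "T3 \<longlonglongrightarrow> integral\<^sup>L std_normal_distribution f"
    using weak_conv_imp_integral_bdd_continuous_conv[OF real_distribution_distr_pmf real_dist_normal_dist
        binomial_half_clt, of f 1] cont bounded
    unfolding T3_def integral_distr_binomial_half[OF borel_measurable_continuous_onI[OF cont]]
    by (simp add: continuous_on_eq_continuous_at)
  moreover have "(\<lambda>n. E n - T3 n) \<longlonglongrightarrow> 0"
  proof (rule Lim_null_comparison)
    have "(\<lambda>n. L * (4 / real n + 2 / sqrt (real n)) + L * (2 / sqrt (real n))) \<longlonglongrightarrow> 0"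
      by real_asymp
    from tendsto_add[OF this tendsto_sum_abs_prob_da_binomial_div2[folded tv_def]]
    show "(\<lambda>n. L * (4 / real n + 2 / sqrt (real n)) + L * (2 / sqrt (real n)) + tv n) \<longlonglongrightarrow> 0"
      by simp
    have "\<bar>T1 n - T2 n\<bar> \<le> tv n" and "\<bar>T2 n - T3 n\<bar> \<le> L * (2 / sqrt (real n))" for n
      unfolding T1_def T2_def T3_def tv_def
      by (rule abs_sum_diff_le_sum_abs_diff[OF bounded], rule binomial_div2_sum_near_binomial[OF lip])
    with eventually_std_da_sum_near_centred[OF lip, folded E_def T1_def]
    show "\<forall>\<^sub>F n in sequentially.
        norm (E n - T3 n) \<le> L * (4 / real n + 2 / sqrt (real n)) + L * (2 / sqrt (real n)) + tv n"
      by (elim eventually_mono) (smt (verit) real_norm_def)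
  qed
  ultimately have "E \<longlonglongrightarrow> integral\<^sup>L std_normal_distribution f"
    by (rule Lim_transform)
  then show ?thesis
    unfolding E_def integral_distr_std_da[OF borel_measurable_continuous_onI[OF cont]] .
qed

theorem corollary3p2:
  shows "weak_conv_m
           (\<lambda>n. distr (measure_pmf (unifG n)) borel
                   (\<lambda>w. (real (da n w) - meanX n) / sqrt (varX n)))
           std_normal_distribution
       \<and> (\<lambda>n. meanX n - real n / 2) \<in> O(\<lambda>_. 1)
       \<and> (\<lambda>n. varX n - real n / 4) \<in> O(\<lambda>_. 1)"
proof (intro conjI meanX_bigo varX_bigo)
  show "weak_conv_m (\<lambda>n. distr (measure_pmf (unifG n)) borel (\<lambda>w. (real (da n w) - meanX n) / sqrt (varX n)))
      std_normal_distribution"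
  proof (rule integral_cts_step_conv_imp_weak_conv[OF real_distribution_distr_pmf real_dist_normal_dist])
    fix x y :: real
    assume "x < y"
    then show "(\<lambda>n. integral\<^sup>L (distr (measure_pmf (unifG n)) borel
        (\<lambda>w. (real (da n w) - meanX n) / sqrt (varX n))) (cts_step x y))
      \<longlonglongrightarrow> integral\<^sup>L std_normal_distribution (cts_step x y)"
      by (intro tendsto_integral_std_da[OF lipschitz_on_cts_step] abs_cts_step_le)
  qed
qed

end
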